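(* Let $W$ be the Weyl group of a simply laced spherical Coxeter diagram, let $r$ be a reflection in $W$ with positive root $\delta_r$, and let $\beta,\gamma$ be two mutually orthogonal positive roots both moved by $r$, i.e. $(\beta,\delta_r)\neq0$ and $(\gamma,\delta_r)\ne0$. Then there exists a reflection $s\in W$ commuting with $r$ such that $\{\beta\}=rs\{\gamma\}$.
   Context: Roots are normalized to have $(\alpha,\alpha)=2$. For a set $B$ of mutually orthogonal positive roots and $w\in W$, $wB=\Phi^+\cap\{\pm w\beta:\beta\in B\}$, where $\Phi^+$ is the set of positive roots. *)

theory Defs
  imports "HOL-Analysis.Analysis"
begin

definition refl :: "'a::euclidean_space \<Rightarrow> 'a \<Rightarrow> 'a" where
  "refl a x = x - ((2 * (x \<bullet> a)) / (a \<bullet> a)) *\<^sub>R a"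

text \<open>These are exactly the
  root systems of simply laced spherical Coxeter diagrams (disjoint unions of ADE).\<close>
definition simply_laced_root_system :: "'a::euclidean_space set \<Rightarrow> bool" where
  "simply_laced_root_system \<Phi> \<longleftrightarrow>
     finite \<Phi> \<and>
     (\<forall>\<alpha>\<in>\<Phi>. \<alpha> \<bullet> \<alpha> = 2) \<and>
     (\<forall>\<alpha>\<in>\<Phi>. \<forall>\<beta>\<in>\<Phi>. \<alpha> \<bullet> \<beta> \<in> \<int>) \<and>
     (\<forall>\<alpha>\<in>\<Phi>. \<forall>\<beta>\<in>\<Phi>. refl \<alpha> \<beta> \<in> \<Phi>)"

inductive_set weyl_group :: "'a::euclidean_space set \<Rightarrow> ('a \<Rightarrow> 'a) set"
  for \<Phi> :: "'a set" where
  weyl_id: "id \<in> weyl_group \<Phi>"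
| weyl_step: "w \<in> weyl_group \<Phi> \<Longrightarrow> \<alpha> \<in> \<Phi> \<Longrightarrow> refl \<alpha> \<circ> w \<in> weyl_group \<Phi>"

text \<open>Positive roots with respect to a generic vector v (no root orthogonal to v);
  every positive system of a finite root system arises in this way.\<close>
definition positive_roots :: "'a::euclidean_space set \<Rightarrow> 'a \<Rightarrow> 'a set" where
  "positive_roots \<Phi> v = {\<alpha> \<in> \<Phi>. 0 < v \<bullet> \<alpha>}"

definition weyl_act :: "'a::euclidean_space set \<Rightarrow> 'a \<Rightarrow> ('a \<Rightarrow> 'a) \<Rightarrow> 'a set \<Rightarrow> 'a set" where
  "weyl_act \<Phi> v w B = positive_roots \<Phi> v \<inter> {x. \<exists>\<beta>\<in>B. x = w \<beta> \<or> x = - w \<beta>}"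

end

theory Submission
  imports Defs
begin

text \<open>Since the root system is simply laced, the inner products \<open>\<beta> \<bullet> \<delta>\<close> and \<open>\<gamma> \<bullet> \<delta>\<close> are
  \<open>\<plusminus>1\<close>. The root \<open>\<alpha> = r\<^sub>\<beta> (r\<^sub>\<delta> \<gamma>)\<close> is orthogonal to \<open>\<delta>\<close>, so \<open>s = r\<^sub>\<alpha>\<close> commutes with
  \<open>r\<^sub>\<delta>\<close>, and a direct computation gives \<open>r\<^sub>\<delta> (r\<^sub>\<alpha> \<gamma>) = \<plusminus>\<beta>\<close>.\<close>

lemma refl_uminus [simp]: "refl (- a) = refl a"
  by (auto simp: refl_def)

lemma refl_norm2:
  assumes "a \<bullet> a = 2"
  shows "refl a x = x - (x \<bullet> a) *\<^sub>R a"
  using assms by (simp add: refl_def)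

lemma refl_self: "a \<noteq> 0 \<Longrightarrow> refl a a = - a"
  by (simp add: refl_def scaleR_2 algebra_simps)

lemma refl_comm:
  assumes "a \<bullet> b = 0"
  shows "refl a \<circ> refl b = refl b \<circ> refl a"
proof
  fix x
  have "b \<bullet> a = 0" using assms by (simp add: inner_commute)
  then show "(refl a \<circ> refl b) x = (refl b \<circ> refl a) x"
    using assms by (simp add: refl_def inner_diff_left algebra_simps)
qed

lemma refl_in_weyl_group: "\<alpha> \<in> \<Phi> \<Longrightarrow> refl \<alpha> \<in> weyl_group \<Phi>"
  using weyl_group.weyl_step[OF weyl_group.weyl_id] by fastforce

lemma inner_roots_cases:
  fixes a b :: "'a::euclidean_space"
  assumes "a \<bullet> a = 2" "b \<bullet> b = 2" "a \<bullet> b \<in> \<int>" "a \<noteq> b" "a \<noteq> - b"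
  shows "a \<bullet> b \<in> {-1, 0, 1}"
proof -
  obtain k where k: "a \<bullet> b = of_int k" using assms(3) by (auto elim: Ints_cases)
  have "(a - b) \<bullet> (a - b) = 4 - 2 * (a \<bullet> b)" "(a + b) \<bullet> (a + b) = 4 + 2 * (a \<bullet> b)"
    using assms(1,2) by (simp_all add: algebra_simps inner_commute)
  moreover have "0 < (a - b) \<bullet> (a - b)" "0 < (a + b) \<bullet> (a + b)"
    using assms(4,5) by (auto simp: add_eq_0_iff2)
  ultimately have "-2 < k" "k < 2" using k by auto
  then show ?thesis using k by auto
qed

lemma simply_laced_root_systemD:
  assumes "simply_laced_root_system \<Phi>" "\<alpha> \<in> \<Phi>" "\<beta> \<in> \<Phi>"
  shows "\<alpha> \<bullet> \<alpha> = 2" "\<alpha> \<bullet> \<beta> \<in> \<int>" "refl \<alpha> \<beta> \<in> \<Phi>" "- \<alpha> \<in> \<Phi>"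
proof -
  show "\<alpha> \<bullet> \<alpha> = 2" "\<alpha> \<bullet> \<beta> \<in> \<int>" "refl \<alpha> \<beta> \<in> \<Phi>"
    using assms by (auto simp: simply_laced_root_system_def)
  then have "\<alpha> \<noteq> 0" by auto
  then show "- \<alpha> \<in> \<Phi>"
    using assms by (metis refl_self simply_laced_root_system_def)
qed

lemma simply_laced_inner_sq:
  assumes "simply_laced_root_system \<Phi>" "\<alpha> \<in> \<Phi>" "\<beta> \<in> \<Phi>"
    and "\<alpha> \<noteq> \<beta>" "\<alpha> \<noteq> - \<beta>" "\<alpha> \<bullet> \<beta> \<noteq> 0"
  shows "(\<alpha> \<bullet> \<beta>)\<^sup>2 = 1"
  using inner_roots_cases[of \<alpha> \<beta>] simply_laced_root_systemD[OF assms(1-3)]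
    simply_laced_root_systemD[OF assms(1,3,2)] assms(4-6)
  by auto

lemma refl_eq_refl_positive_root:
  assumes "simply_laced_root_system \<Phi>" "\<forall>\<alpha>\<in>\<Phi>. v \<bullet> \<alpha> \<noteq> 0" "\<alpha> \<in> \<Phi>"
  obtains \<alpha>' where "\<alpha>' \<in> positive_roots \<Phi> v" "refl \<alpha>' = refl \<alpha>"
proof (cases "0 < v \<bullet> \<alpha>")
  case True
  with assms(3) that show ?thesis by (auto simp: positive_roots_def)
next
  case False
  with assms have "- \<alpha> \<in> positive_roots \<Phi> v"
    by (auto simp: positive_roots_def simply_laced_root_systemD(4) order_neq_le_trans)
  with that show ?thesis by simp
qed

lemma weyl_act_singleton:
  assumes "\<beta> \<in> positive_roots \<Phi> v" "w \<gamma> = \<beta> \<or> w \<gamma> = - \<beta>"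
  shows "weyl_act \<Phi> v w {\<gamma>} = {\<beta>}"
  using assms by (auto simp: weyl_act_def positive_roots_def)

lemma refl_refl_orthogonal_root:
  fixes \<beta> \<gamma> \<delta> :: "'a::euclidean_space"
  assumes "\<delta> \<bullet> \<delta> = 2" "\<beta> \<bullet> \<beta> = 2" "\<gamma> \<bullet> \<gamma> = 2" "\<beta> \<bullet> \<gamma> = 0"
    and "(\<beta> \<bullet> \<delta>)\<^sup>2 = 1" "(\<gamma> \<bullet> \<delta>)\<^sup>2 = 1"
  defines "\<alpha> \<equiv> refl \<beta> (refl \<delta> \<gamma>)"
  shows "\<alpha> \<bullet> \<delta> = 0" and "refl \<delta> (refl \<alpha> \<gamma>) = - ((\<beta> \<bullet> \<delta>) * (\<gamma> \<bullet> \<delta>)) *\<^sub>R \<beta>"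
proof -
  define b c where "b = \<beta> \<bullet> \<delta>" and "c = \<gamma> \<bullet> \<delta>"
  have \<alpha>: "\<alpha> = \<gamma> - c *\<^sub>R \<delta> + (b * c) *\<^sub>R \<beta>"
    using assms(1,2,4) by (simp add: \<alpha>_def refl_norm2 b_def c_def algebra_simps inner_commute)
  show "\<alpha> \<bullet> \<delta> = 0"
    using assms(1,5) by (simp add: \<alpha> algebra_simps power2_eq_square b_def[symmetric] c_def[symmetric])
  have bb: "b * b = 1" and cc: "c * c = 1"
    using assms(5,6) by (simp_all add: b_def c_def power2_eq_square)
  have inner_eqs: "\<delta> \<bullet> \<beta> = b" "\<delta> \<bullet> \<gamma> = c" "\<gamma> \<bullet> \<beta> = 0"
    using assms(4) by (simp_all add: b_def c_def inner_commute)
  then have "\<gamma> \<bullet> \<alpha> = 1" "\<alpha> \<bullet> \<alpha> = 2"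
    using assms(1-4) cc bb by (simp_all add: \<alpha> algebra_simps b_def[symmetric] c_def[symmetric])
  then have r\<alpha>: "refl \<alpha> \<gamma> = c *\<^sub>R \<delta> - (b * c) *\<^sub>R \<beta>"
    by (simp add: refl_norm2 \<alpha>)
  have "refl \<alpha> \<gamma> \<bullet> \<delta> = c"
    using assms(1) bb by (simp add: r\<alpha> algebra_simps b_def[symmetric] inner_eqs)
  then have "refl \<delta> (refl \<alpha> \<gamma>) = refl \<alpha> \<gamma> - c *\<^sub>R \<delta>"
    using assms(1) by (simp add: refl_norm2)
  also have "\<dots> = - (b * c) *\<^sub>R \<beta>"
    by (simp add: r\<alpha>)
  finally show "refl \<delta> (refl \<alpha> \<gamma>) = - ((\<beta> \<bullet> \<delta>) * (\<gamma> \<bullet> \<delta>)) *\<^sub>R \<beta>"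
    by (simp add: b_def c_def)
qed

theorem lemma2p3:
  fixes \<Phi> :: "'a::euclidean_space set" and v \<delta> \<beta> \<gamma> :: 'a
  assumes "simply_laced_root_system \<Phi>"
    and "\<forall>\<alpha>\<in>\<Phi>. v \<bullet> \<alpha> \<noteq> 0"
    and "\<delta> \<in> positive_roots \<Phi> v"
    and "\<beta> \<in> positive_roots \<Phi> v" and "\<gamma> \<in> positive_roots \<Phi> v"
    and "\<beta> \<bullet> \<gamma> = 0"
    and "\<beta> \<bullet> \<delta> \<noteq> 0" and "\<gamma> \<bullet> \<delta> \<noteq> 0"
  shows "\<exists>s. s \<in> weyl_group \<Phi> \<and> (\<exists>\<alpha>\<in>positive_roots \<Phi> v. s = refl \<alpha>) \<and>
             refl \<delta> \<circ> s = s \<circ> refl \<delta> \<and>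
             {\<beta>} = weyl_act \<Phi> v (refl \<delta> \<circ> s) {\<gamma>}"
proof -
  note root = simply_laced_root_systemD[OF assms(1)]
  have roots: "\<delta> \<in> \<Phi>" "\<beta> \<in> \<Phi>" "\<gamma> \<in> \<Phi>"
    using assms(3-5) by (simp_all add: positive_roots_def)
  have "\<beta> \<noteq> \<delta>" "\<beta> \<noteq> - \<delta>" "\<gamma> \<noteq> \<delta>" "\<gamma> \<noteq> - \<delta>"
    using assms(6-8) by (auto simp: inner_commute)
  then have b: "(\<beta> \<bullet> \<delta>)\<^sup>2 = 1" and c: "(\<gamma> \<bullet> \<delta>)\<^sup>2 = 1"
    using simply_laced_inner_sq[OF assms(1)] roots assms(7,8) by auto
  define \<alpha> where "\<alpha> = refl \<beta> (refl \<delta> \<gamma>)"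
  have "\<alpha> \<in> \<Phi>"
    using root roots by (simp add: \<alpha>_def)
  then obtain \<alpha>' where \<alpha>': "\<alpha>' \<in> positive_roots \<Phi> v" "refl \<alpha>' = refl \<alpha>"
    using refl_eq_refl_positive_root[OF assms(1,2)] by blast
  have "\<delta> \<bullet> \<delta> = 2" "\<beta> \<bullet> \<beta> = 2" "\<gamma> \<bullet> \<gamma> = 2"
    using root roots by blast+
  note \<alpha>_props = refl_refl_orthogonal_root[OF this assms(6) b c, folded \<alpha>_def]
  have "refl \<delta> \<circ> refl \<alpha> = refl \<alpha> \<circ> refl \<delta>"
    using \<alpha>_props(1) by (simp add: refl_comm inner_commute)
  moreover have "(refl \<delta> \<circ> refl \<alpha>) \<gamma> = \<beta> \<or> (refl \<delta> \<circ> refl \<alpha>) \<gamma> = - \<beta>"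
    using \<alpha>_props(2) b c by (auto simp: power2_eq_1_iff)
  ultimately show ?thesis
    using \<alpha>' weyl_act_singleton[OF assms(4)] refl_in_weyl_group[of \<alpha>' \<Phi>]
    by (metis positive_roots_def mem_Collect_eq)
qed

end
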